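(* Let $G$ be a connected graph that has a cut vertex. Then a minimum connecting transition set of $G$ has size exactly $|V(G)|-2$; equivalently, $\{V(G)\}$ is a connecting hypergraph of $G$ of minimum cost.
   Context: All graphs are finite, simple and undirected. A cut vertex of a connected graph $G$ is a vertex $p$ such that $G-p$ is disconnected. $G[X]$ denotes the subgraph induced by $X\subseteq V(G)$. A transition of a graph $G$ is an unordered pair $\{ab,bc\}$ of two distinct edges of $G$ sharing the vertex $b$ (so $a\neq c$); it is written $abc$. A walk in $G$ is a sequence $(v_1,\dots,v_k)$ of vertices with $v_iv_{i+1}\in E(G)$ for all $i\le k-1$; it leads from $v_1$ to $v_k$. For a set $T$ of transitions of $G$, a walk $(v_1,\dots,v_k)$ is $T$-compatible if for every $i\in[1,k-2]$, either $v_i=v_{i+2}$ or $v_iv_{i+1}v_{i+2}\in T$. The graph $G$ is $T$-connected, and $T$ is a connecting transition set of $G$, if for all vertices $u,v$ of $G$ there is a $T$-compatible walk leading from $u$ to $v$. A connecting hypergraph of $G$ is a set $H$ of subsets of $V(G)$ such that every $E\in H$ satisfies $|E|\ge 2$ and $G[E]$ is connected, and for every pair of distinct non-adjacent vertices $u,v$ of $G$ there exists $E\in H$ with $u,v\in E$. Its cost is $\mathrm{cost}(H)=\sum_{E\in H}(|E|-2)$. *)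

theory Defs
  imports Main
begin

definition simple_graph :: "'a set \<Rightarrow> 'a set set \<Rightarrow> bool" where
  "simple_graph V E \<longleftrightarrow> finite V \<and> (\<forall>e\<in>E. \<exists>u v. e = {u, v} \<and> u \<noteq> v \<and> u \<in> V \<and> v \<in> V)"

definition is_walk :: "'a set set \<Rightarrow> 'a list \<Rightarrow> bool" where
  "is_walk E xs \<longleftrightarrow> xs \<noteq> [] \<and> (\<forall>i. Suc i < length xs \<longrightarrow> {xs ! i, xs ! Suc i} \<in> E)"

definition graph_connected :: "'a set \<Rightarrow> 'a set set \<Rightarrow> bool" where
  "graph_connected V E \<longleftrightarrow> V \<noteq> {} \<and>
     (\<forall>u\<in>V. \<forall>v\<in>V. \<exists>xs. is_walk E xs \<and> set xs \<subseteq> V \<and> hd xs = u \<and> last xs = v)"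

definition induced_edges :: "'a set set \<Rightarrow> 'a set \<Rightarrow> 'a set set" where
  "induced_edges E X = {e \<in> E. e \<subseteq> X}"

definition cut_vertex :: "'a set \<Rightarrow> 'a set set \<Rightarrow> 'a \<Rightarrow> bool" where
  "cut_vertex V E p \<longleftrightarrow> p \<in> V \<and>
     (\<exists>u\<in>V - {p}. \<exists>v\<in>V - {p}. \<not> (\<exists>xs. is_walk (induced_edges E (V - {p})) xs
         \<and> set xs \<subseteq> V - {p} \<and> hd xs = u \<and> last xs = v))"

definition transition :: "'a \<Rightarrow> 'a \<Rightarrow> 'a \<Rightarrow> 'a set set" where
  "transition a b c = {{a, b}, {b, c}}"

definition transitions :: "'a set set \<Rightarrow> 'a set set set" where
  "transitions E = {transition a b c | a b c. {a, b} \<in> E \<and> {b, c} \<in> E \<and> a \<noteq> c}"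

definition T_compatible :: "'a set set set \<Rightarrow> 'a list \<Rightarrow> bool" where
  "T_compatible T xs \<longleftrightarrow> (\<forall>i. i + 2 < length xs \<longrightarrow>
      xs ! i = xs ! (i + 2) \<or> transition (xs ! i) (xs ! (i + 1)) (xs ! (i + 2)) \<in> T)"

definition connecting_transition_set :: "'a set \<Rightarrow> 'a set set \<Rightarrow> 'a set set set \<Rightarrow> bool" where
  "connecting_transition_set V E T \<longleftrightarrow> T \<subseteq> transitions E \<and>
     (\<forall>u\<in>V. \<forall>v\<in>V. \<exists>xs. is_walk E xs \<and> T_compatible T xs \<and> hd xs = u \<and> last xs = v)"

definition connecting_hypergraph :: "'a set \<Rightarrow> 'a set set \<Rightarrow> 'a set set \<Rightarrow> bool" where
  "connecting_hypergraph V E H \<longleftrightarrow>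
     (\<forall>X\<in>H. X \<subseteq> V \<and> 2 \<le> card X \<and> graph_connected X (induced_edges E X)) \<and>
     (\<forall>u\<in>V. \<forall>v\<in>V. u \<noteq> v \<and> {u, v} \<notin> E \<longrightarrow> (\<exists>X\<in>H. u \<in> X \<and> v \<in> X))"

definition hcost :: "'a set set \<Rightarrow> nat" where
  "hcost H = (\<Sum>X\<in>H. card X - 2)"

end

theory Submission
  imports Defs
begin

text \<open>
  Upper bound: grow a tree from a single edge. When a new vertex \<open>w\<close> is attached at \<open>x\<close>, and
  \<open>xy\<close> is an edge already in the tree, the one transition \<open>wxy\<close> suffices to keep all arcs of
  the tree mutually reachable by compatible walks (walks may turn back on themselves); a single
  edge needs no transition, so \<open>|V| - 2\<close> transitions suffice.

  Lower bound: group the edges into classes linked by chains of transitions of \<open>T\<close>. A class of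
  \<open>k\<close> edges needs \<open>k - 1\<close> transitions and spans at most \<open>k + 1\<close> vertices, so the vertex sets
  of the classes form a connecting hypergraph of cost at most \<open>|T|\<close>. If \<open>p\<close> is a cut vertex
  separating \<open>A\<close> from \<open>B\<close>, every hyperedge meeting both \<open>A\<close> and \<open>B\<close> contains \<open>p\<close>, and
  a charging argument gives cost at least \<open>|A| + |B| - 1 = |V| - 2\<close>, which \<open>{V}\<close> attains.
\<close>

lemma simple_graph_edge_subset: "simple_graph V E \<Longrightarrow> e \<in> E \<Longrightarrow> e \<subseteq> V"
  unfolding simple_graph_def by auto

lemma simple_graph_edge_other:
  assumes "simple_graph V E" "e \<in> E" "x \<in> e"
  obtains y where "e = {x, y}" "x \<noteq> y" "y \<in> V"
proof -
  obtain u v where "e = {u, v}" "u \<noteq> v" "u \<in> V" "v \<in> V"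
    using assms(1,2) unfolding simple_graph_def by blast
  moreover have "{u, v} = {v, u}" by (rule insert_commute)
  ultimately show ?thesis using assms(3) that by blast
qed

lemma simple_graph_card_edge: "simple_graph V E \<Longrightarrow> e \<in> E \<Longrightarrow> card e = 2"
  unfolding simple_graph_def by auto

lemma simple_graph_finite_edges: "simple_graph V E \<Longrightarrow> finite E"
  using finite_subset[of E "Pow V"] simple_graph_edge_subset unfolding simple_graph_def by blast

lemma finite_transitions: "finite E \<Longrightarrow> finite (transitions E)"
  by (rule finite_subset[of _ "Pow E"]) (auto simp: transitions_def transition_def)

lemma transition_commute: "transition a b c = transition c b a"
  unfolding transition_def by (simp add: insert_commute)

definition arcs :: "'a set set \<Rightarrow> ('a \<times> 'a) set" where
  "arcs F = {(u, v). {u, v} \<in> F}"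

lemma in_arcs_iff [simp]: "(u, v) \<in> arcs F \<longleftrightarrow> {u, v} \<in> F"
  by (simp add: arcs_def)

lemma sym_arcs: "sym (arcs F)"
  by (auto intro: symI simp: insert_commute)

lemma arcs_mono: "F \<subseteq> F' \<Longrightarrow> arcs F \<subseteq> arcs F'"
  by auto

lemma arcs_insert: "arcs (insert {x, w} S) = insert (x, w) (insert (w, x) (arcs S))"
  by (auto simp: doubleton_eq_iff)

lemma rtrancl_exits:
  assumes "(x, y) \<in> r\<^sup>*" "x \<in> U" "y \<notin> U"
  obtains u v where "(u, v) \<in> r" "u \<in> U" "v \<notin> U"
  using Image_closed_trancl[of r U] assms by blast

lemma is_walk_snoc:
  assumes "is_walk E xs" "{last xs, z} \<in> E"
  shows "is_walk E (xs @ [z])"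
  unfolding is_walk_def
proof (intro conjI allI impI)
  fix i assume i: "Suc i < length (xs @ [z])"
  have "xs \<noteq> []" using assms(1) unfolding is_walk_def by simp
  then show "{(xs @ [z]) ! i, (xs @ [z]) ! Suc i} \<in> E"
  proof (cases "Suc i < length xs")
    case False
    then have "i = length xs - 1" using i by simp
    then show ?thesis using assms(2) \<open>xs \<noteq> []\<close> by (simp add: nth_append last_conv_nth)
  qed (use assms(1) in \<open>auto simp: is_walk_def nth_append\<close>)
qed simp

lemma is_walk_rtrancl_arcs:
  assumes "is_walk F xs"
  shows "(hd xs, last xs) \<in> (arcs F)\<^sup>*"
proof -
  have ne: "xs \<noteq> []" using assms unfolding is_walk_def by simp
  have "i < length xs \<Longrightarrow> (hd xs, xs ! i) \<in> (arcs F)\<^sup>*" for i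
  proof (induction i)
    case 0 then show ?case using ne by (simp add: hd_conv_nth)
  next
    case (Suc i)
    then have "(xs ! i, xs ! Suc i) \<in> arcs F" using assms unfolding is_walk_def by simp
    with Suc show ?case by (meson Suc_lessD rtrancl.rtrancl_into_rtrancl)
  qed
  then show ?thesis using ne by (simp add: last_conv_nth)
qed

lemma rtrancl_arcs_walk:
  assumes "(x, y) \<in> (arcs F)\<^sup>*" "x \<in> X" "F \<subseteq> Pow X"
  shows "\<exists>xs. is_walk F xs \<and> set xs \<subseteq> X \<and> hd xs = x \<and> last xs = y"
  using assms(1)
proof (induction rule: rtrancl_induct)
  case base
  show ?case by (rule exI[of _ "[x]"]) (use assms(2) in \<open>simp add: is_walk_def\<close>)
next
  case (step y z)
  then obtain xs where xs: "is_walk F xs" "set xs \<subseteq> X" "hd xs = x" "last xs = y"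
    by blast
  have "{y, z} \<in> F" using step.hyps(2) by simp
  then have "is_walk F (xs @ [z])" "z \<in> X" using xs assms(3) by (auto intro: is_walk_snoc)
  moreover have "xs \<noteq> []" using xs(1) unfolding is_walk_def by simp
  ultimately show ?case using xs by (intro exI[of _ "xs @ [z]"]) simp
qed

lemma graph_connected_rtrancl_arcs:
  "graph_connected V E \<Longrightarrow> u \<in> V \<Longrightarrow> v \<in> V \<Longrightarrow> (u, v) \<in> (arcs E)\<^sup>*"
  unfolding graph_connected_def using is_walk_rtrancl_arcs by fastforce

lemma graph_connectedI_rtrancl_arcs:
  assumes "r \<in> X" "E \<subseteq> Pow X" "X \<subseteq> (arcs E)\<^sup>* `` {r}"
  shows "graph_connected X E"
  unfolding graph_connected_def
proof (intro conjI ballI)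
  fix u v assume "u \<in> X" "v \<in> X"
  then have "(r, u) \<in> (arcs E)\<^sup>*" "(r, v) \<in> (arcs E)\<^sup>*" using assms(3) by auto
  then have "(u, v) \<in> (arcs E)\<^sup>*"
    using sym_rtrancl[OF sym_arcs] by (meson rtrancl_trans symD)
  then show "\<exists>xs. is_walk E xs \<and> set xs \<subseteq> X \<and> hd xs = u \<and> last xs = v"
    using \<open>u \<in> X\<close> assms(2) by (rule rtrancl_arcs_walk)
qed (use assms(1) in blast)

lemma graph_connected_exit:
  assumes G: "simple_graph V E" and C: "graph_connected V E"
    and U: "U \<subseteq> V" and u: "u \<in> U" and v: "v \<in> V - U"
  shows "\<exists>x w. {x, w} \<in> E \<and> x \<in> U \<and> w \<in> V - U"
proof -
  have "(u, v) \<in> (arcs E)\<^sup>*" using U u v graph_connected_rtrancl_arcs[OF C] by blast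
  from rtrancl_exits[OF this u] obtain x w where "(x, w) \<in> arcs E" "x \<in> U" "w \<notin> U"
    using v by blast
  then show ?thesis
    using simple_graph_edge_subset[OF G] by (metis in_arcs_iff insert_subset Diff_iff)
qed

lemma finite_subset_grow_induct:
  assumes "finite W" "U \<subseteq> W" "P U"
    and step: "\<And>U. U \<subset> W \<Longrightarrow> P U \<Longrightarrow> \<exists>x \<in> W - U. P (insert x U)"
  shows "P W"
  using assms(2,3)
proof (induction "card (W - U)" arbitrary: U rule: less_induct)
  case less
  show ?case
  proof (cases "U = W")
    case False
    with less.prems obtain x where x: "x \<in> W - U" "P (insert x U)" using step by blast
    have "card (W - insert x U) < card (W - U)"
      using x(1) assms(1) by (intro psubset_card_mono) auto
    with less x show ?thesis by blast
  qed (use less in simp)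
qed

lemma card_le_Suc_card_if_rtrancl_arcs:
  assumes W: "finite W" and F: "F \<subseteq> Pow W" and r: "r \<in> W"
    and reach: "W \<subseteq> (arcs F)\<^sup>* `` {r}"
  shows "card W \<le> card F + 1"
proof -
  have finF: "finite F" using finite_subset[OF F] W by blast
  let ?P = "\<lambda>U. r \<in> U \<and> (\<exists>F' \<subseteq> F. F' \<subseteq> Pow U \<and> card U \<le> card F' + 1)"
  have "?P W"
  proof (rule finite_subset_grow_induct[OF W, of "{r}"])
    fix U assume U: "U \<subset> W" and "?P U"
    then obtain F' where F': "F' \<subseteq> F" "F' \<subseteq> Pow U" "card U \<le> card F' + 1" and "r \<in> U"
      by blast
    obtain w where "w \<in> W - U" using U by blast
    then have "(r, w) \<in> (arcs F)\<^sup>*" "w \<notin> U" using reach by auto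
    then obtain x y where xy: "{x, y} \<in> F" "x \<in> U" "y \<notin> U"
      using rtrancl_exits \<open>r \<in> U\<close> by (metis in_arcs_iff)
    have "y \<in> W" using xy(1) F by blast
    have "{x, y} \<notin> F'" using F'(2) xy(3) by blast
    then have "card (insert {x, y} F') = card F' + 1"
      using finite_subset[OF F'(1) finF] by simp
    moreover have "card (insert y U) = card U + 1"
      using finite_subset[of U W] U W xy(3) by auto
    ultimately have "card (insert y U) \<le> card (insert {x, y} F') + 1" using F'(3) by linarith
    moreover have "insert {x, y} F' \<subseteq> F" "insert {x, y} F' \<subseteq> Pow (insert y U)"
      using F' xy by auto
    ultimately have "?P (insert y U)" using \<open>r \<in> U\<close> by blast
    moreover have "y \<in> W - U" using \<open>y \<in> W\<close> xy(3) by blast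
    ultimately show "\<exists>y \<in> W - U. ?P (insert y U)" by (rule bexI[where x = y])
  next
    show "?P {r}" by auto
  qed (use r in simp)
  then obtain F' where "F' \<subseteq> F" "card W \<le> card F' + 1" by blast
  with card_mono[OF finF] show ?thesis by (meson add_le_mono1 le_trans)
qed

text \<open>A \<open>T\<close>-compatible walk is a path in the digraph whose vertices are the arcs (directed
  edges) of \<open>G\<close>, where \<open>(a, b)\<close> may be followed by \<open>(b, c)\<close> if either \<open>c = a\<close> or \<open>abc \<in> T\<close>.\<close>

definition arc_step :: "'a set set \<Rightarrow> 'a set set set \<Rightarrow> (('a \<times> 'a) \<times> ('a \<times> 'a)) set" where
  "arc_step E T = {((a, b), (b', c)). b' = b \<and> {b, c} \<in> E \<and> (a = c \<or> transition a b c \<in> T)}"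

lemma in_arc_step_iff [simp]:
  "((a, b), (b', c)) \<in> arc_step E T \<longleftrightarrow> b' = b \<and> {b, c} \<in> E \<and> (a = c \<or> transition a b c \<in> T)"
  by (simp add: arc_step_def)

lemma arc_step_mono: "T \<subseteq> T' \<Longrightarrow> arc_step E T \<subseteq> arc_step E T'"
  by (auto simp: arc_step_def)

lemma T_compatible_snoc:
  assumes "T_compatible T (zs @ [c, d])" "c = e \<or> transition c d e \<in> T"
  shows "T_compatible T (zs @ [c, d, e])"
  unfolding T_compatible_def
proof (intro allI impI)
  fix i assume i: "i + 2 < length (zs @ [c, d, e])"
  show "(zs @ [c, d, e]) ! i = (zs @ [c, d, e]) ! (i + 2) \<or>
      transition ((zs @ [c, d, e]) ! i) ((zs @ [c, d, e]) ! (i + 1)) ((zs @ [c, d, e]) ! (i + 2)) \<in> T"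
  proof (cases "i + 2 < length (zs @ [c, d])")
    case True
    have "(zs @ [c, d, e]) ! j = (zs @ [c, d]) ! j" if "j < length (zs @ [c, d])" for j
      using nth_append_left[OF that, of "[e]"] by simp
    with True show ?thesis
      using assms(1)[unfolded T_compatible_def, rule_format, of i] by simp
  next
    case False
    then have "i = length zs" using i by simp
    then show ?thesis using assms(2) by (simp add: nth_append)
  qed
qed

lemma arc_path_walk:
  assumes "{a, b} \<in> E" "((a, b), (c, d)) \<in> (arc_step E T)\<^sup>*"
  shows "\<exists>xs. is_walk E xs \<and> T_compatible T xs \<and> hd xs = a \<and> last xs = d"
proof -
  have "\<exists>zs. is_walk E (zs @ [c, d]) \<and> T_compatible T (zs @ [c, d]) \<and> hd (zs @ [c, d]) = a"
    using assms(2)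
  proof (induction rule: rtrancl_induct2)
    case refl
    have "is_walk E [a, b]" using assms(1) by (simp add: is_walk_def less_Suc_eq)
    then show ?case by (intro exI[of _ "[]"]) (simp add: T_compatible_def)
  next
    case (step c d d' e)
    then obtain zs where zs: "is_walk E (zs @ [c, d])" "T_compatible T (zs @ [c, d])"
      "hd (zs @ [c, d]) = a" by blast
    have "d' = d" "{d, e} \<in> E" "c = e \<or> transition c d e \<in> T" using step.hyps(2) by simp_all
    then have "is_walk E ((zs @ [c]) @ [d, e])" "T_compatible T ((zs @ [c]) @ [d, e])"
      using is_walk_snoc[OF zs(1)] T_compatible_snoc[OF zs(2)] by simp_all
    moreover have "hd ((zs @ [c]) @ [d, e]) = a" using zs(3) by (cases zs) simp_all
    ultimately show ?case using \<open>d' = d\<close> by blast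
  qed
  then obtain zs where "is_walk E (zs @ [c, d])" "T_compatible T (zs @ [c, d])"
    "hd (zs @ [c, d]) = a" by blast
  then show ?thesis by (intro exI[of _ "zs @ [c, d]"]) simp
qed

lemma walk_arc_path:
  assumes "is_walk E xs" "T_compatible T xs" "Suc i < length xs"
  shows "((xs ! 0, xs ! 1), (xs ! i, xs ! Suc i)) \<in> (arc_step E T)\<^sup>*"
  using assms(3)
proof (induction i)
  case (Suc i)
  have "{xs ! Suc i, xs ! Suc (Suc i)} \<in> E" using assms(1) Suc.prems unfolding is_walk_def by blast
  moreover have "xs ! i = xs ! Suc (Suc i) \<or> transition (xs ! i) (xs ! Suc i) (xs ! Suc (Suc i)) \<in> T"
    using assms(2)[unfolded T_compatible_def, rule_format, of i] Suc.prems by simp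
  ultimately have "((xs ! i, xs ! Suc i), (xs ! Suc i, xs ! Suc (Suc i))) \<in> arc_step E T" by simp
  with Suc show ?case by (meson Suc_lessD rtrancl.rtrancl_into_rtrancl)
qed simp

lemma arc_path_edge_path:
  assumes "((a, b), (c, d)) \<in> (arc_step E T)\<^sup>*"
  shows "({a, b}, {c, d}) \<in> (arcs T)\<^sup>*"
  using assms
proof (induction rule: rtrancl_induct2)
  case (step c d d' e)
  then have "d' = d" "c = e \<or> transition c d e \<in> T" by simp_all
  then have "{c, d} = {d', e} \<or> ({c, d}, {d', e}) \<in> arcs T"
    by (auto simp: transition_def insert_commute)
  with step.IH show ?case by (metis rtrancl.rtrancl_into_rtrancl)
qed simp

definition arcs_linked :: "'a set set \<Rightarrow> 'a set set set \<Rightarrow> 'a set set \<Rightarrow> bool" where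
  "arcs_linked E T S \<longleftrightarrow> arcs S \<times> arcs S \<subseteq> (arc_step E T)\<^sup>*"

lemma arcs_linked_insert:
  assumes linked: "arcs_linked E T S" and S: "S \<subseteq> E" and xy: "{x, y} \<in> S" and xw: "{x, w} \<in> E"
  shows "arcs_linked E (insert (transition w x y) T) (insert {x, w} S)"
proof -
  let ?R = "(arc_step E (insert (transition w x y) T))\<^sup>*"
  have old: "arcs S \<times> arcs S \<subseteq> ?R"
    using linked rtrancl_mono[OF arc_step_mono[of T "insert (transition w x y) T" E]]
    unfolding arcs_linked_def by blast
  have wx: "{w, x} \<in> E" using xw by (simp add: insert_commute)
  have "{x, y} \<in> E" using xy S by blast
  then have turn: "((w, x), (x, y)) \<in> ?R" by (simp add: r_into_rtrancl)
  have flip: "((x, w), (w, x)) \<in> ?R" "((w, x), (x, w)) \<in> ?R"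
    using xw wx by (simp_all add: r_into_rtrancl)
  have enter: "((y, x), (x, w)) \<in> ?R"
    using xw by (simp add: r_into_rtrancl transition_commute)
  have yx: "(y, x) \<in> arcs S" "(x, y) \<in> arcs S" using xy by (simp_all add: insert_commute)
  have to_hub: "(\<alpha>, (x, w)) \<in> ?R" if "\<alpha> \<in> arcs (insert {x, w} S)" for \<alpha>
    using that old yx enter flip unfolding arcs_insert by (blast intro: rtrancl_trans)
  have from_hub: "((x, w), \<beta>) \<in> ?R" if "\<beta> \<in> arcs (insert {x, w} S)" for \<beta>
    using that old yx turn flip unfolding arcs_insert by (blast intro: rtrancl_trans)
  show ?thesis
    unfolding arcs_linked_def using to_hub from_hub by (blast intro: rtrancl_trans)
qed

lemma connecting_transition_set_if_arcs_linked:
  assumes G: "simple_graph V E" and S: "S \<subseteq> E" "\<Union>S = V"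
    and T: "T \<subseteq> transitions E" and linked: "arcs_linked E T S"
  shows "connecting_transition_set V E T"
  unfolding connecting_transition_set_def
proof (intro conjI ballI)
  fix u v assume "u \<in> V" "v \<in> V"
  then obtain e f where ef: "e \<in> S" "u \<in> e" "f \<in> S" "v \<in> f" using S(2) by blast
  obtain u' v' where "e = {u, u'}" "f = {v, v'}"
    using ef S simple_graph_edge_other[OF G] by (metis subsetD)
  then have "{u, u'} \<in> E" "(u, u') \<in> arcs S" "(v', v) \<in> arcs S"
    using ef S by (auto simp: insert_commute)
  moreover from this have "((u, u'), (v', v)) \<in> (arc_step E T)\<^sup>*"
    using linked unfolding arcs_linked_def by blast
  ultimately show "\<exists>xs. is_walk E xs \<and> T_compatible T xs \<and> hd xs = u \<and> last xs = v"
    by (intro arc_path_walk)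
qed (rule T)

lemma arcs_linked_extend:
  assumes G: "simple_graph V E" and S: "S \<subseteq> E" and T: "T \<subseteq> transitions E"
    and linked: "arcs_linked E T S" and card: "card T + 2 \<le> card (\<Union>S)"
    and xw: "{x, w} \<in> E" "x \<in> \<Union>S" "w \<notin> \<Union>S"
  shows "\<exists>T'. T' \<subseteq> transitions E \<and> card T' + 2 \<le> card (insert w (\<Union>S))
    \<and> arcs_linked E T' (insert {x, w} S)"
proof -
  obtain e where e: "e \<in> S" "x \<in> e" using xw(2) by blast
  then obtain y where y: "e = {x, y}" using S simple_graph_edge_other[OF G] by blast
  have "{w, x} \<in> E" "{x, y} \<in> E" "w \<noteq> y"
    using xw e y S by (auto simp: insert_commute)
  then have new: "transition w x y \<in> transitions E" unfolding transitions_def by blast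
  have "finite T"
    using finite_subset[OF T finite_transitions[OF simple_graph_finite_edges[OF G]]] .
  then have "card (insert (transition w x y) T) \<le> card T + 1" by (simp add: card_insert_if)
  moreover have "\<Union>S \<subseteq> V" using S simple_graph_edge_subset[OF G] by blast
  then have "card (insert w (\<Union>S)) = card (\<Union>S) + 1"
    using xw(3) G finite_subset unfolding simple_graph_def by fastforce
  ultimately show ?thesis
    using card T new arcs_linked_insert[OF linked S e(1)[unfolded y] xw(1)]
    by (intro exI[of _ "insert (transition w x y) T"]) auto
qed

lemma exists_small_connecting_transition_set:
  assumes G: "simple_graph V E" and C: "graph_connected V E" and V: "2 \<le> card V"
  shows "\<exists>T. connecting_transition_set V E T \<and> card T + 2 \<le> card V"
proof -
  have finV: "finite V" using G unfolding simple_graph_def by blast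
  let ?P = "\<lambda>U. \<exists>S T. S \<subseteq> E \<and> \<Union>S = U \<and> T \<subseteq> transitions E \<and> card T + 2 \<le> card U
    \<and> arcs_linked E T S"
  obtain u v where "u \<in> V" "v \<in> V - {u}"
    using V card_le_Suc0_iff_eq[OF finV] by force
  then obtain x w where xw: "{x, w} \<in> E" "x = u" "w \<in> V - {u}"
    using graph_connected_exit[OF G C, of "{u}" u v] by blast
  have "?P V"
  proof (rule finite_subset_grow_induct[OF finV, of "{x, w}"])
    show "{x, w} \<subseteq> V" using xw simple_graph_edge_subset[OF G] by blast
    have "arcs_linked E {} {{x, w}}"
      using xw(1) by (auto simp: arcs_linked_def insert_commute doubleton_eq_iff r_into_rtrancl)
    then show "?P {x, w}" using xw by (intro exI[of _ "{{x, w}}"] exI[of _ "{}"]) auto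
  next
    fix U assume U: "U \<subset> V" and "?P U"
    then obtain S T where ST: "S \<subseteq> E" "\<Union>S = U" "T \<subseteq> transitions E" "card T + 2 \<le> card U"
      "arcs_linked E T S" by blast
    obtain u where "u \<in> U" using ST(4) by fastforce
    then obtain x w where xw: "{x, w} \<in> E" "x \<in> U" "w \<in> V - U"
      using U graph_connected_exit[OF G C] by (metis psubset_imp_ex_mem psubset_imp_subset)
    have "card T + 2 \<le> card (\<Union>S)" "x \<in> \<Union>S" "w \<notin> \<Union>S" using xw ST(2,4) by auto
    from arcs_linked_extend[OF G ST(1,3,5) this(1) xw(1) this(2,3)]
    obtain T' where "T' \<subseteq> transitions E" "card T' + 2 \<le> card (insert w U)"
      "arcs_linked E T' (insert {x, w} S)"
      unfolding ST(2) by blast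
    moreover have "insert {x, w} S \<subseteq> E" "\<Union>(insert {x, w} S) = insert w U"
      using xw ST(1,2) by auto
    ultimately have "?P (insert w U)" by blast
    then show "\<exists>w\<in>V - U. ?P (insert w U)" using xw(3) by (rule bexI[where x = w])
  qed
  then show ?thesis using connecting_transition_set_if_arcs_linked[OF G] by blast
qed

text \<open>A transition is a pair of edges, so \<open>arcs T\<close> relates two edges iff they form a transition
  of \<open>T\<close>.\<close>

definition transition_class :: "'a set set set \<Rightarrow> 'a set \<Rightarrow> 'a set set" where
  "transition_class T e = (arcs T)\<^sup>* `` {e}"

lemma arcs_transitions:
  assumes "T \<subseteq> transitions E" "(g, h) \<in> arcs T"
  shows "g \<in> E" "h \<in> E" "g \<inter> h \<noteq> {}"
proof -
  obtain a b c where "{g, h} = {{a, b}, {b, c}}" "{a, b} \<in> E" "{b, c} \<in> E"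
    using assms unfolding transitions_def transition_def by auto
  then show "g \<in> E" "h \<in> E" "g \<inter> h \<noteq> {}" by (auto simp: doubleton_eq_iff)
qed

lemma transition_class_self: "e \<in> transition_class T e"
  by (simp add: transition_class_def)

lemma transition_class_subset:
  assumes "T \<subseteq> transitions E" "e \<in> E"
  shows "transition_class T e \<subseteq> E"
proof
  fix f assume "f \<in> transition_class T e"
  then have "(e, f) \<in> (arcs T)\<^sup>*" by (simp add: transition_class_def)
  then show "f \<in> E" by (induction rule: rtrancl_induct) (use assms arcs_transitions in blast)+
qed

lemma transition_class_eq:
  assumes "f \<in> transition_class T e"
  shows "transition_class T f = transition_class T e"
proof -
  have "equiv UNIV ((arcs T)\<^sup>*)"
    by (simp add: equiv_def refl_rtrancl sym_rtrancl[OF sym_arcs] trans_rtrancl)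
  with assms show ?thesis
    unfolding transition_class_def by (metis Image_singleton_iff equiv_class_eq)
qed

lemma transition_class_reachable:
  "transition_class T e \<subseteq> (arcs {t \<in> T. t \<subseteq> transition_class T e})\<^sup>* `` {e}"
proof
  fix f assume "f \<in> transition_class T e"
  then have "(e, f) \<in> (arcs T)\<^sup>*" by (simp add: transition_class_def)
  then show "f \<in> (arcs {t \<in> T. t \<subseteq> transition_class T e})\<^sup>* `` {e}"
  proof (induction rule: rtrancl_induct)
    case (step g h)
    then have "g \<in> transition_class T e" "h \<in> transition_class T e"
      unfolding transition_class_def by (auto intro: rtrancl_into_rtrancl)
    with step have "(g, h) \<in> arcs {t \<in> T. t \<subseteq> transition_class T e}" by simp
    with step.IH show ?case by (meson Image_singleton_iff rtrancl.rtrancl_into_rtrancl)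
  qed simp
qed

lemma transition_class_vertices_reachable:
  assumes G: "simple_graph V E" and T: "T \<subseteq> transitions E" and e: "e \<in> E" "r \<in> e"
  shows "\<Union>(transition_class T e) \<subseteq> (arcs (transition_class T e))\<^sup>* `` {r}"
proof -
  let ?K = "transition_class T e"
  have "f \<subseteq> (arcs ?K)\<^sup>* `` {r}" if "(e, f) \<in> (arcs T)\<^sup>*" for f
    using that
  proof (induction rule: rtrancl_induct)
    case base
    obtain r' where "e = {r, r'}" using simple_graph_edge_other[OF G e] by blast
    then have "(r, r') \<in> arcs ?K" using transition_class_self[of e T] by simp
    then show ?case using \<open>e = {r, r'}\<close> by auto
  next
    case (step g h)
    then have "h \<in> ?K" unfolding transition_class_def by (auto intro: rtrancl_into_rtrancl)
    obtain b where b: "b \<in> g" "b \<in> h" using arcs_transitions[OF T step(2)] by blast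
    then obtain c where "h = {b, c}"
      using simple_graph_edge_other[OF G arcs_transitions(2)[OF T step(2)]] by blast
    then have "(b, c) \<in> arcs ?K" using \<open>h \<in> ?K\<close> by simp
    moreover have "(r, b) \<in> (arcs ?K)\<^sup>*" using step.IH b(1) by blast
    ultimately show ?case using \<open>h = {b, c}\<close> by (auto intro: rtrancl_into_rtrancl)
  qed
  then show ?thesis unfolding transition_class_def by blast
qed

lemma card_Union_transition_class_le:
  assumes G: "simple_graph V E" and T: "T \<subseteq> transitions E" and e: "e \<in> E"
  shows "card (\<Union>(transition_class T e)) \<le> card {t \<in> T. t \<subseteq> transition_class T e} + 2"
proof -
  let ?K = "transition_class T e"
  have KE: "?K \<subseteq> E" using transition_class_subset[OF T e] .
  obtain r where r: "r \<in> e" using simple_graph_card_edge[OF G e] by fastforce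
  have "\<Union>?K \<subseteq> V" using KE simple_graph_edge_subset[OF G] by blast
  then have "finite (\<Union>?K)" using G finite_subset unfolding simple_graph_def by blast
  then have "card (\<Union>?K) \<le> card ?K + 1"
    using r transition_class_self[of e T] transition_class_vertices_reachable[OF G T e r]
    by (intro card_le_Suc_card_if_rtrancl_arcs[of _ _ r]) auto
  moreover have "card ?K \<le> card {t \<in> T. t \<subseteq> ?K} + 1"
    using finite_subset[OF KE simple_graph_finite_edges[OF G]] transition_class_reachable
    by (intro card_le_Suc_card_if_rtrancl_arcs[of _ _ e]) (auto simp: transition_class_self)
  ultimately show ?thesis by linarith
qed

lemma graph_connected_transition_class:
  assumes G: "simple_graph V E" and T: "T \<subseteq> transitions E" and e: "e \<in> E"
  shows "graph_connected (\<Union>(transition_class T e)) (induced_edges E (\<Union>(transition_class T e)))"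
proof -
  let ?K = "transition_class T e"
  obtain r where r: "r \<in> e" using simple_graph_card_edge[OF G e] by fastforce
  have "?K \<subseteq> induced_edges E (\<Union>?K)"
    using transition_class_subset[OF T e] unfolding induced_edges_def by blast
  then have "(arcs ?K)\<^sup>* \<subseteq> (arcs (induced_edges E (\<Union>?K)))\<^sup>*"
    by (intro rtrancl_mono arcs_mono)
  then show ?thesis
    using r transition_class_self[of e T] transition_class_vertices_reachable[OF G T e r]
    by (intro graph_connectedI_rtrancl_arcs[of r]) (auto simp: induced_edges_def)
qed

lemma connecting_transition_set_covers:
  assumes T: "connecting_transition_set V E T" and uv: "u \<in> V" "v \<in> V" "u \<noteq> v"
  shows "\<exists>e\<in>E. u \<in> \<Union>(transition_class T e) \<and> v \<in> \<Union>(transition_class T e)"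
proof -
  obtain xs where xs: "is_walk E xs" "T_compatible T xs" "hd xs = u" "last xs = v"
    using T uv unfolding connecting_transition_set_def by blast
  have "xs \<noteq> []" using xs(1) unfolding is_walk_def by simp
  then have len: "2 \<le> length xs"
    using xs(3,4) uv(3) by (cases xs) (auto split: if_splits simp: Suc_le_eq)
  define i where "i = length xs - 2"
  have i: "Suc i < length xs" "xs ! Suc i = v" using len xs(4) \<open>xs \<noteq> []\<close>
    by (auto simp: i_def last_conv_nth Suc_diff_Suc numeral_2_eq_2)
  have "u = xs ! 0" using xs(3) \<open>xs \<noteq> []\<close> by (simp add: hd_conv_nth)
  have e: "{xs ! 0, xs ! 1} \<in> E" using xs(1) len unfolding is_walk_def by auto
  have "({xs ! 0, xs ! 1}, {xs ! i, xs ! Suc i}) \<in> (arcs T)\<^sup>*"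
    using walk_arc_path[OF xs(1,2) i(1)] by (rule arc_path_edge_path)
  then have "{xs ! i, v} \<in> transition_class T {xs ! 0, xs ! 1}"
    unfolding transition_class_def i(2) by simp
  moreover have "{xs ! 0, xs ! 1} \<in> transition_class T {xs ! 0, xs ! 1}"
    by (rule transition_class_self)
  ultimately show ?thesis using e \<open>u = xs ! 0\<close> by blast
qed

lemma hcost_transition_classes_le:
  assumes G: "simple_graph V E" and T: "T \<subseteq> transitions E"
  shows "hcost ((\<lambda>e. \<Union>(transition_class T e)) ` E) \<le> card T"
proof -
  let ?C = "transition_class T ` E"
  let ?TK = "\<lambda>K. {t \<in> T. t \<subseteq> K}"
  have finE: "finite E" using simple_graph_finite_edges[OF G] .
  have finT: "finite T" using finite_subset[OF T finite_transitions[OF finE]] .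
  have disjoint: "?TK K1 \<inter> ?TK K2 = {}" if "K1 \<in> ?C" "K2 \<in> ?C" "K1 \<noteq> K2" for K1 K2
  proof (rule ccontr)
    assume "?TK K1 \<inter> ?TK K2 \<noteq> {}"
    then obtain t where "t \<in> T" "t \<subseteq> K1" "t \<subseteq> K2" by blast
    moreover have "t \<noteq> {}" using \<open>t \<in> T\<close> T unfolding transitions_def transition_def by auto
    ultimately obtain g where "g \<in> K1" "g \<in> K2" by blast
    then show False using that transition_class_eq by (metis imageE)
  qed
  have "hcost ((\<lambda>e. \<Union>(transition_class T e)) ` E) = (\<Sum>X\<in>Union ` ?C. card X - 2)"
    by (simp add: hcost_def image_image)
  also have "\<dots> \<le> (\<Sum>K\<in>?C. card (\<Union>K) - 2)"
    using sum_image_le[of ?C "\<lambda>X. card X - 2" Union] finE by (simp add: comp_def)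
  also have "\<dots> \<le> (\<Sum>K\<in>?C. card (?TK K))"
    using card_Union_transition_class_le[OF G T] by (intro sum_mono) fastforce
  also have "\<dots> = card (\<Union>K\<in>?C. ?TK K)"
    using finE finT disjoint by (intro card_UN_disjoint[symmetric]) auto
  also have "\<dots> \<le> card T" using finT by (intro card_mono) auto
  finally show ?thesis .
qed

lemma connecting_hypergraph_transition_classes:
  assumes G: "simple_graph V E" and T: "connecting_transition_set V E T"
  shows "connecting_hypergraph V E ((\<lambda>e. \<Union>(transition_class T e)) ` E)"
  unfolding connecting_hypergraph_def
proof (intro conjI ballI impI)
  have Tsub: "T \<subseteq> transitions E" using T unfolding connecting_transition_set_def by blast
  fix X assume "X \<in> (\<lambda>e. \<Union>(transition_class T e)) ` E"
  then obtain e where e: "e \<in> E" and X: "X = \<Union>(transition_class T e)" by blast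
  show "X \<subseteq> V"
    using X transition_class_subset[OF Tsub e] simple_graph_edge_subset[OF G] by blast
  then have "finite X" using G finite_subset unfolding simple_graph_def by blast
  moreover have "e \<subseteq> X" using X transition_class_self[of e T] by blast
  ultimately show "2 \<le> card X" using simple_graph_card_edge[OF G e] card_mono by metis
  show "graph_connected X (induced_edges E X)"
    unfolding X by (rule graph_connected_transition_class[OF G Tsub e])
next
  fix u v assume "u \<in> V" "v \<in> V" "u \<noteq> v \<and> {u, v} \<notin> E"
  then obtain e where "e \<in> E" "u \<in> \<Union>(transition_class T e)" "v \<in> \<Union>(transition_class T e)"
    using connecting_transition_set_covers[OF T] by blast
  then show "\<exists>X\<in>(\<lambda>e. \<Union>(transition_class T e)) ` E. u \<in> X \<and> v \<in> X" by blast
qed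

lemma cut_vertex_sides:
  assumes G: "simple_graph V E" and p: "cut_vertex V E p"
  obtains A B where "V = insert p (A \<union> B)" "p \<notin> A" "p \<notin> B" "A \<inter> B = {}" "A \<noteq> {}" "B \<noteq> {}"
    "\<And>x y. {x, y} \<in> E \<Longrightarrow> x \<in> A \<Longrightarrow> y \<noteq> p \<Longrightarrow> y \<in> A"
proof -
  let ?F = "induced_edges E (V - {p})"
  obtain u v where "p \<in> V" and u: "u \<in> V - {p}" and v: "v \<in> V - {p}"
    and no_walk: "\<not> (\<exists>xs. is_walk ?F xs \<and> set xs \<subseteq> V - {p} \<and> hd xs = u \<and> last xs = v)"
    using p unfolding cut_vertex_def by blast
  have F: "?F \<subseteq> Pow (V - {p})" unfolding induced_edges_def by blast
  define A where "A = (arcs ?F)\<^sup>* `` {u}"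
  have "arcs ?F `` (V - {p}) \<subseteq> V - {p}" using F by auto
  then have "A \<subseteq> V - {p}" unfolding A_def using u Image_closed_trancl by blast
  moreover have "u \<in> A" unfolding A_def by simp
  moreover have "v \<notin> A" using rtrancl_arcs_walk[OF _ u F] no_walk unfolding A_def by blast
  moreover have "y \<in> A" if "{x, y} \<in> E" "x \<in> A" "y \<noteq> p" for x y
  proof -
    have "{x, y} \<in> ?F"
      using that \<open>A \<subseteq> V - {p}\<close> simple_graph_edge_subset[OF G] unfolding induced_edges_def by auto
    with that(2) show ?thesis unfolding A_def by (auto intro: rtrancl_into_rtrancl)
  qed
  ultimately show ?thesis using \<open>p \<in> V\<close> v by (intro that[of A "V - {p} - A"]) auto
qed

text \<open>Charging argument for the lower bound: fix \<open>a \<in> A\<close>; charge each \<open>b \<in> B\<close> to a hyperedge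
  containing \<open>a\<close> and \<open>b\<close>, and each \<open>a' \<in> A - {a}\<close> to a hyperedge containing \<open>a'\<close> and some
  vertex of \<open>B\<close>. A hyperedge meeting both sides contains the cut vertex \<open>p\<close>, so it receives
  at most \<open>|X| - 2\<close> charges.\<close>

lemma card_charges_le:
  assumes X: "finite X" "2 \<le> card X" "X \<subseteq> insert p (A \<union> B)"
    and AB: "p \<notin> A" "p \<notin> B" "A \<inter> B = {}"
    and sep: "X \<inter> A \<noteq> {} \<Longrightarrow> X \<inter> B \<noteq> {} \<Longrightarrow> p \<in> X"
    and a: "a \<in> A"
  shows "card (if a \<in> X then X \<inter> B else {}) + card (if X \<inter> B = {} then {} else X \<inter> (A - {a}))
    \<le> card X - 2"
proof (cases "X \<inter> A = {} \<or> X \<inter> B = {}")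
  case True
  then have "(if a \<in> X then X \<inter> B else {}) = {}" "(if X \<inter> B = {} then {} else X \<inter> (A - {a})) = {}"
    using a by auto
  then show ?thesis by simp
next
  case False
  then have "X = insert p ((X \<inter> A) \<union> (X \<inter> B))" using X(3) sep by blast
  also have "card \<dots> = Suc (card ((X \<inter> A) \<union> (X \<inter> B)))"
    using X(1) AB(1,2) by (intro card_insert_disjoint) auto
  also have "card ((X \<inter> A) \<union> (X \<inter> B)) = card (X \<inter> A) + card (X \<inter> B)"
    using X(1) AB(3) by (intro card_Un_disjoint) auto
  finally have "card X = Suc (card (X \<inter> A) + card (X \<inter> B))" .
  moreover have "card (X \<inter> (A - {a})) = card (X \<inter> A) - (if a \<in> X then 1 else 0)"
    using X(1) a by (simp add: Int_Diff[symmetric] card_Diff_singleton_if)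
  moreover have "card (X \<inter> A) > 0" "card (X \<inter> B) > 0" using False X(1) by auto
  ultimately show ?thesis using False by auto
qed

lemma card_sides_le_hcost:
  assumes fin: "finite A" "finite B" and AB: "p \<notin> A" "p \<notin> B" "A \<inter> B = {}" "A \<noteq> {}" "B \<noteq> {}"
    and H: "\<And>X. X \<in> H \<Longrightarrow> X \<subseteq> insert p (A \<union> B) \<and> 2 \<le> card X"
    and sep: "\<And>X. X \<in> H \<Longrightarrow> X \<inter> A \<noteq> {} \<Longrightarrow> X \<inter> B \<noteq> {} \<Longrightarrow> p \<in> X"
    and cov: "\<And>a b. a \<in> A \<Longrightarrow> b \<in> B \<Longrightarrow> \<exists>X\<in>H. a \<in> X \<and> b \<in> X"
  shows "card A + card B \<le> hcost H + 1"
proof -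
  obtain a where a: "a \<in> A" using AB(4) by blast
  have finH: "finite H" using H fin finite_subset[of H "Pow (insert p (A \<union> B))"] by blast
  have finX: "finite X" if "X \<in> H" for X using H[OF that] fin finite_subset by blast
  define S1 where "S1 X = (if a \<in> X then X \<inter> B else {})" for X
  define S2 where "S2 X = (if X \<inter> B = {} then {} else X \<inter> (A - {a}))" for X
  have "B \<subseteq> (\<Union>X\<in>H. S1 X)" using cov[OF a] unfolding S1_def by fastforce
  then have "card B \<le> (\<Sum>X\<in>H. card (S1 X))"
    using finH finX card_mono[of "\<Union>X\<in>H. S1 X" B] card_UN_le[OF finH, of S1]
    unfolding S1_def by fastforce
  moreover have "A - {a} \<subseteq> (\<Union>X\<in>H. S2 X)" using cov AB(5) unfolding S2_def by fastforce
  then have "card (A - {a}) \<le> (\<Sum>X\<in>H. card (S2 X))"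
    using finH finX card_mono[of "\<Union>X\<in>H. S2 X" "A - {a}"] card_UN_le[OF finH, of S2]
    unfolding S2_def by fastforce
  moreover have "(\<Sum>X\<in>H. card (S1 X)) + (\<Sum>X\<in>H. card (S2 X)) \<le> hcost H"
    unfolding hcost_def sum.distrib[symmetric] S1_def S2_def
    by (intro sum_mono card_charges_le; use H finX AB(1-3) sep a in blast)
  moreover have "card (A - {a}) = card A - 1" "card A \<ge> 1"
    using a fin(1) by (auto simp: Suc_le_eq card_gt_0_iff)
  ultimately show ?thesis by linarith
qed

lemma hcost_ge_if_cut_vertex:
  assumes G: "simple_graph V E" and p: "cut_vertex V E p" and H: "connecting_hypergraph V E H"
  shows "card V - 2 \<le> hcost H"
proof -
  obtain A B where V: "V = insert p (A \<union> B)"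
    and AB: "p \<notin> A" "p \<notin> B" "A \<inter> B = {}" "A \<noteq> {}" "B \<noteq> {}"
    and closed: "\<And>x y. {x, y} \<in> E \<Longrightarrow> x \<in> A \<Longrightarrow> y \<noteq> p \<Longrightarrow> y \<in> A"
    using cut_vertex_sides[OF G p] by blast
  have fin: "finite A" "finite B" using G V unfolding simple_graph_def by auto
  have HX: "X \<subseteq> V" "2 \<le> card X" "graph_connected X (induced_edges E X)" if "X \<in> H" for X
    using H that unfolding connecting_hypergraph_def by auto
  have "card A + card B \<le> hcost H + 1"
  proof (rule card_sides_le_hcost[OF fin AB])
    fix X assume X: "X \<in> H" and "X \<inter> A \<noteq> {}" "X \<inter> B \<noteq> {}"
    then obtain a b where ab: "a \<in> X \<inter> A" "b \<in> X \<inter> B" by blast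
    then have "(a, b) \<in> (arcs (induced_edges E X))\<^sup>*"
      using graph_connected_rtrancl_arcs[OF HX(3)[OF X]] by blast
    from rtrancl_exits[OF this, of A]
    obtain x y where "{x, y} \<in> induced_edges E X" "x \<in> A" "y \<notin> A"
      using ab AB(3) by auto
    then show "p \<in> X" using closed unfolding induced_edges_def by blast
  next
    fix a b assume "a \<in> A" "b \<in> B"
    moreover have "a \<noteq> b \<and> {a, b} \<notin> E" using closed calculation AB by blast
    ultimately show "\<exists>X\<in>H. a \<in> X \<and> b \<in> X" using H V unfolding connecting_hypergraph_def by blast
  qed (use HX V in auto)
  moreover have "card V = card A + card B + 1" using V AB fin by (simp add: card_Un_disjoint)
  ultimately show ?thesis by linarith
qed

theorem lemma5:
  fixes V :: "'a set" and E :: "'a set set"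
  assumes "simple_graph V E"
    and "graph_connected V E"
    and "\<exists>p. cut_vertex V E p"
  shows "(\<exists>T. connecting_transition_set V E T \<and> card T = card V - 2)
       \<and> (\<forall>T. connecting_transition_set V E T \<longrightarrow> card V - 2 \<le> card T)
       \<and> connecting_hypergraph V E {V}
       \<and> (\<forall>H. connecting_hypergraph V E H \<longrightarrow> hcost {V} \<le> hcost H)"
proof -
  note G = assms(1) and C = assms(2)
  obtain p where p: "cut_vertex V E p" using assms(3) by blast
  have lower: "card V - 2 \<le> card T" if "connecting_transition_set V E T" for T
    using connecting_hypergraph_transition_classes[OF G that] hcost_transition_classes_le[OF G]
      hcost_ge_if_cut_vertex[OF G p] that
    unfolding connecting_transition_set_def by (meson order_trans)
  obtain u v where "u \<in> V" "v \<in> V" "u \<noteq> v" using p unfolding cut_vertex_def by blast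
  then have V2: "2 \<le> card V"
    using G card_mono[of V "{u, v}"] unfolding simple_graph_def by force
  obtain T where "connecting_transition_set V E T" "card T + 2 \<le> card V"
    using exists_small_connecting_transition_set[OF G C V2] by blast
  moreover have "induced_edges E V = E"
    using simple_graph_edge_subset[OF G] unfolding induced_edges_def by blast
  ultimately show ?thesis
    using lower V2 C hcost_ge_if_cut_vertex[OF G p]
    by (auto simp: connecting_hypergraph_def hcost_def intro!: le_antisym exI[of _ T])
qed

end
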